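(* Let $\Lambda=(I,\varphi_i,\gamma_{ij})$ be a direct system of formulas in a functional language $\mathcal{L}$, $\mathcal{B}$ an $\mathcal{L}$-algebra, and suppose every $\varphi_i$ is realizable in $\mathcal{B}$, so that $\mathcal{B}_\Lambda=L(\Lambda)$ is a limit algebra over $\mathcal{B}$. Then there exists an ultrafilter $D$ over $I$ such that $\mathcal{B}_\Lambda$ embeds into the ultrapower $\mathcal{B}^I/D$.
   Context: Functional language: operation symbols $F$ (arity $n_F$) and constants only. A diagram-formula in a finite reduct $\mathcal{L}'$ of $\mathcal{L}$ in a finite variable set $X$ is a conjunction of atomic formulas and negated atomic formulas of $\mathcal{L}'$ such that: $\neg(x=y)$ is a conjunct for all distinct $x,y\in X$; for each operation $F\in\mathcal{L}'$ and $(x_0,\dots,x_{n_F})\in X^{n_F+1}$ exactly one of $F(x_1,\dots,x_{n_F})=x_0$ and its negation is a conjunct; for each constant $c\in\mathcal{L}'$ and $x\in X$ exactly one of $x=c$, $\neg(x=c)$ is a conjunct. A direct system of formulas $\Lambda=(I,\varphi_i,\gamma_{ij})$: $(I,\le)$ directed; each $\varphi_i$ a consistent diagram-formula in a finite reduct $\mathcal{L}_i$ and finite variables $X_i$; maps $\gamma_{ij}:X_i\to X_j$ ($i\le j$) with $\gamma_{ii}=\mathrm{id}$, $\gamma_{jk}\gamma_{ij}=\gamma_{ik}$, every conjunct of $\varphi_i(\gamma_{ij}(X_i))$ a conjunct of $\varphi_j$; every constant $c$ appears in a conjunct $x=c$ of some $\varphi_i$; for every $F$, $i$, $(x_1,\dots,x_{n_F})\in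 X_i^{n_F}$ some $j\ge i$ has a conjunct $F(\gamma_{ij}(x_1),\dots,\gamma_{ij}(x_{n_F}))=x_j$, $x_j\in X_j$. The limit algebra $L(\Lambda)$: universe $\{(x,i):x\in X_i\}/\!\equiv$ with $(x,i)\equiv(y,j)$ iff $\gamma_{ik}(x)=\gamma_{jk}(y)$ for some $k\ge i,j$; constants and operations are read off from conjuncts $x=c$ and $F(\gamma_{i_1j}(x_1),\dots)=x_j$ of the $\varphi_j$ (well defined). $\varphi_i$ is realizable in $\mathcal{B}$ if it is true under some assignment $X_i\to B$. *)

theory Defs
  imports Main "HOL-Library.FuncSet"
begin

text \<open>Operation symbols have type 'f with arity function ar; constants have type 'c;
  variables have type 'v.  The language L consists of all symbols of these types.\<close>

datatype ('f, 'c, 'v) trm = Var 'v | Cst 'c | App 'f "('f, 'c, 'v) trm list"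

datatype ('f, 'c, 'v) lit = Pos "('f, 'c, 'v) trm" "('f, 'c, 'v) trm"
                          | Neg "('f, 'c, 'v) trm" "('f, 'c, 'v) trm"

fun wf_trm :: "('f \<Rightarrow> nat) \<Rightarrow> ('f, 'c, 'v) trm \<Rightarrow> bool" where
  "wf_trm ar (Var x) = True"
| "wf_trm ar (Cst c) = True"
| "wf_trm ar (App F ts) = (length ts = ar F \<and> (\<forall>t\<in>set ts. wf_trm ar t))"

fun ops_trm :: "('f, 'c, 'v) trm \<Rightarrow> 'f set" where
  "ops_trm (Var x) = {}"
| "ops_trm (Cst c) = {}"
| "ops_trm (App F ts) = insert F (\<Union>t\<in>set ts. ops_trm t)"

fun csts_trm :: "('f, 'c, 'v) trm \<Rightarrow> 'c set" where
  "csts_trm (Var x) = {}"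
| "csts_trm (Cst c) = {c}"
| "csts_trm (App F ts) = (\<Union>t\<in>set ts. csts_trm t)"

fun vars_trm :: "('f, 'c, 'v) trm \<Rightarrow> 'v set" where
  "vars_trm (Var x) = {x}"
| "vars_trm (Cst c) = {}"
| "vars_trm (App F ts) = (\<Union>t\<in>set ts. vars_trm t)"

fun subst_trm :: "('v \<Rightarrow> 'w) \<Rightarrow> ('f, 'c, 'v) trm \<Rightarrow> ('f, 'c, 'w) trm" where
  "subst_trm g (Var x) = Var (g x)"
| "subst_trm g (Cst c) = Cst c"
| "subst_trm g (App F ts) = App F (map (subst_trm g) ts)"

fun lit_trms :: "('f, 'c, 'v) lit \<Rightarrow> ('f, 'c, 'v) trm set" where
  "lit_trms (Pos t s) = {t, s}"
| "lit_trms (Neg t s) = {t, s}"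

fun subst_lit :: "('v \<Rightarrow> 'w) \<Rightarrow> ('f, 'c, 'v) lit \<Rightarrow> ('f, 'c, 'w) lit" where
  "subst_lit g (Pos t s) = Pos (subst_trm g t) (subst_trm g s)"
| "subst_lit g (Neg t s) = Neg (subst_trm g t) (subst_trm g s)"

record ('a, 'f, 'c) alg =
  carrier :: "'a set"
  opr :: "'f \<Rightarrow> 'a list \<Rightarrow> 'a"
  cst :: "'c \<Rightarrow> 'a"

definition is_alg :: "('f \<Rightarrow> nat) \<Rightarrow> ('a, 'f, 'c, 'z) alg_scheme \<Rightarrow> bool" where
  "is_alg ar A \<longleftrightarrow>
     (\<forall>F as. length as = ar F \<and> set as \<subseteq> carrier A \<longrightarrow> opr A F as \<in> carrier A) \<and>
     (\<forall>c. cst A c \<in> carrier A)"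

fun eval :: "('a, 'f, 'c, 'z) alg_scheme \<Rightarrow> ('v \<Rightarrow> 'a) \<Rightarrow> ('f, 'c, 'v) trm \<Rightarrow> 'a" where
  "eval A \<sigma> (Var x) = \<sigma> x"
| "eval A \<sigma> (Cst c) = cst A c"
| "eval A \<sigma> (App F ts) = opr A F (map (eval A \<sigma>) ts)"

fun sat_lit :: "('a, 'f, 'c, 'z) alg_scheme \<Rightarrow> ('v \<Rightarrow> 'a) \<Rightarrow> ('f, 'c, 'v) lit \<Rightarrow> bool" where
  "sat_lit A \<sigma> (Pos t s) = (eval A \<sigma> t = eval A \<sigma> s)"
| "sat_lit A \<sigma> (Neg t s) = (eval A \<sigma> t \<noteq> eval A \<sigma> s)"

definition realizable :: "('a, 'f, 'c, 'z) alg_scheme \<Rightarrow> 'v set \<Rightarrow> ('f, 'c, 'v) lit set \<Rightarrow> bool" where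
  "realizable A X \<phi> \<longleftrightarrow> (\<exists>\<sigma>. \<sigma> ` X \<subseteq> carrier A \<and> (\<forall>l\<in>\<phi>. sat_lit A \<sigma> l))"

text \<open>Since a satisfiable set of
  quantifier-free formulas in variables X is satisfiable in the substructure generated by the
  image of X (a quotient of the term algebra), it suffices to quantify over algebras whose
  universe lies in the (infinite) type of terms; this gives a type-independent definition.\<close>
definition consistent :: "('f \<Rightarrow> nat) \<Rightarrow> 'v set \<Rightarrow> ('f, 'c, 'v) lit set \<Rightarrow> bool" where
  "consistent ar X \<phi> \<longleftrightarrow>
     (\<exists>A :: (('f, 'c, 'v) trm, 'f, 'c) alg. is_alg ar A \<and> realizable A X \<phi>)"

definition diagram_formula ::
  "('f \<Rightarrow> nat) \<Rightarrow> 'f set \<Rightarrow> 'c set \<Rightarrow> 'v set \<Rightarrow> ('f, 'c, 'v) lit set \<Rightarrow> bool" where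
  "diagram_formula ar Fs Cs X \<phi> \<longleftrightarrow>
     finite \<phi> \<and>
     (\<forall>l\<in>\<phi>. \<forall>t\<in>lit_trms l. wf_trm ar t \<and> ops_trm t \<subseteq> Fs \<and> csts_trm t \<subseteq> Cs
                              \<and> vars_trm t \<subseteq> X) \<and>
     (\<forall>x\<in>X. \<forall>y\<in>X. x \<noteq> y \<longrightarrow> Neg (Var x) (Var y) \<in> \<phi>) \<and>
     (\<forall>F\<in>Fs. \<forall>x0\<in>X. \<forall>xs. length xs = ar F \<and> set xs \<subseteq> X \<longrightarrow>
        (Pos (App F (map Var xs)) (Var x0) \<in> \<phi> \<longleftrightarrow> Neg (App F (map Var xs)) (Var x0) \<notin> \<phi>)) \<and>
     (\<forall>c\<in>Cs. \<forall>x\<in>X. Pos (Var x) (Cst c) \<in> \<phi> \<longleftrightarrow> Neg (Var x) (Cst c) \<notin> \<phi>)"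

definition directed :: "'i set \<Rightarrow> ('i \<Rightarrow> 'i \<Rightarrow> bool) \<Rightarrow> bool" where
  "directed I le \<longleftrightarrow> I \<noteq> {} \<and>
     (\<forall>i\<in>I. le i i) \<and>
     (\<forall>i\<in>I. \<forall>j\<in>I. \<forall>k\<in>I. le i j \<and> le j k \<longrightarrow> le i k) \<and>
     (\<forall>i\<in>I. \<forall>j\<in>I. le i j \<and> le j i \<longrightarrow> i = j) \<and>
     (\<forall>i\<in>I. \<forall>j\<in>I. \<exists>k\<in>I. le i k \<and> le j k)"

definition direct_system ::
  "('f \<Rightarrow> nat) \<Rightarrow> 'i set \<Rightarrow> ('i \<Rightarrow> 'i \<Rightarrow> bool) \<Rightarrow> ('i \<Rightarrow> 'f set) \<Rightarrow> ('i \<Rightarrow> 'c set)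
    \<Rightarrow> ('i \<Rightarrow> 'v set) \<Rightarrow> ('i \<Rightarrow> ('f, 'c, 'v) lit set) \<Rightarrow> ('i \<Rightarrow> 'i \<Rightarrow> 'v \<Rightarrow> 'v) \<Rightarrow> bool" where
  "direct_system ar I le Fs Cs X \<phi> \<gamma> \<longleftrightarrow>
     directed I le \<and>
     (\<forall>i\<in>I. finite (Fs i) \<and> finite (Cs i) \<and> finite (X i) \<and>
             diagram_formula ar (Fs i) (Cs i) (X i) (\<phi> i) \<and> consistent ar (X i) (\<phi> i)) \<and>
     (\<forall>i\<in>I. \<forall>j\<in>I. le i j \<longrightarrow> \<gamma> i j ` X i \<subseteq> X j) \<and>
     (\<forall>i\<in>I. \<forall>x\<in>X i. \<gamma> i i x = x) \<and>
     (\<forall>i\<in>I. \<forall>j\<in>I. \<forall>k\<in>I. le i j \<and> le j k \<longrightarrow> (\<forall>x\<in>X i. \<gamma> j k (\<gamma> i j x) = \<gamma> i k x)) \<and>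
     (\<forall>i\<in>I. \<forall>j\<in>I. le i j \<longrightarrow> (\<forall>l\<in>\<phi> i. subst_lit (\<gamma> i j) l \<in> \<phi> j)) \<and>
     (\<forall>c. \<exists>i\<in>I. \<exists>x\<in>X i. Pos (Var x) (Cst c) \<in> \<phi> i) \<and>
     (\<forall>F. \<forall>i\<in>I. \<forall>xs. length xs = ar F \<and> set xs \<subseteq> X i \<longrightarrow>
        (\<exists>j\<in>I. le i j \<and> (\<exists>x\<in>X j. Pos (App F (map (\<lambda>x. Var (\<gamma> i j x)) xs)) (Var x) \<in> \<phi> j)))"

definition lim_rel :: "'i set \<Rightarrow> ('i \<Rightarrow> 'i \<Rightarrow> bool) \<Rightarrow> ('i \<Rightarrow> 'v set) \<Rightarrow> ('i \<Rightarrow> 'i \<Rightarrow> 'v \<Rightarrow> 'v)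
    \<Rightarrow> (('v \<times> 'i) \<times> ('v \<times> 'i)) set" where
  "lim_rel I le X \<gamma> = {((x, i), (y, j)). i \<in> I \<and> j \<in> I \<and> x \<in> X i \<and> y \<in> X j \<and>
       (\<exists>k\<in>I. le i k \<and> le j k \<and> \<gamma> i k x = \<gamma> j k y)}"

definition lim_alg ::
  "'i set \<Rightarrow> ('i \<Rightarrow> 'i \<Rightarrow> bool) \<Rightarrow> ('i \<Rightarrow> 'v set) \<Rightarrow> ('i \<Rightarrow> ('f, 'c, 'v) lit set)
    \<Rightarrow> ('i \<Rightarrow> 'i \<Rightarrow> 'v \<Rightarrow> 'v) \<Rightarrow> (('v \<times> 'i) set, 'f, 'c) alg" where
  "lim_alg I le X \<phi> \<gamma> =
    (let R = lim_rel I le X \<gamma> in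
     \<lparr> carrier = {(x, i). i \<in> I \<and> x \<in> X i} // R,
       opr = (\<lambda>F as. let ps = map (\<lambda>a. SOME p. p \<in> a) as in
                 R `` {SOME (x, j). j \<in> I \<and> x \<in> X j \<and> (\<forall>p\<in>set ps. le (snd p) j) \<and>
                        Pos (App F (map (\<lambda>p. Var (\<gamma> (snd p) j (fst p))) ps)) (Var x) \<in> \<phi> j}),
       cst = (\<lambda>c. R `` {SOME (x, i). i \<in> I \<and> x \<in> X i \<and> Pos (Var x) (Cst c) \<in> \<phi> i}) \<rparr>)"

definition ultrafilter_on :: "'i set \<Rightarrow> 'i set set \<Rightarrow> bool" where
  "ultrafilter_on I D \<longleftrightarrow>
     D \<subseteq> Pow I \<and> I \<in> D \<and> {} \<notin> D \<and>
     (\<forall>A\<in>D. \<forall>B\<in>D. A \<inter> B \<in> D) \<and>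
     (\<forall>A\<in>D. \<forall>B. A \<subseteq> B \<and> B \<subseteq> I \<longrightarrow> B \<in> D) \<and>
     (\<forall>A. A \<subseteq> I \<longrightarrow> A \<in> D \<or> I - A \<in> D)"

definition up_rel :: "'i set \<Rightarrow> 'i set set \<Rightarrow> 'b set \<Rightarrow> (('i \<Rightarrow> 'b) \<times> ('i \<Rightarrow> 'b)) set" where
  "up_rel I D B = {(f, g). f \<in> I \<rightarrow>\<^sub>E B \<and> g \<in> I \<rightarrow>\<^sub>E B \<and> {i \<in> I. f i = g i} \<in> D}"

definition ultrapower ::
  "('b, 'f, 'c, 'z) alg_scheme \<Rightarrow> 'i set \<Rightarrow> 'i set set \<Rightarrow> (('i \<Rightarrow> 'b) set, 'f, 'c) alg" where
  "ultrapower B I D =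
    (let R = up_rel I D (carrier B) in
     \<lparr> carrier = (I \<rightarrow>\<^sub>E carrier B) // R,
       opr = (\<lambda>F as. let fs = map (\<lambda>a. SOME f. f \<in> a) as in
                 R `` {\<lambda>i\<in>I. opr B F (map (\<lambda>f. f i) fs)}),
       cst = (\<lambda>c. R `` {\<lambda>i\<in>I. cst B c}) \<rparr>)"

definition embedding :: "('f \<Rightarrow> nat) \<Rightarrow> ('a \<Rightarrow> 'b) \<Rightarrow> ('a, 'f, 'c, 'z) alg_scheme
    \<Rightarrow> ('b, 'f, 'c, 'y) alg_scheme \<Rightarrow> bool" where
  "embedding ar h A B \<longleftrightarrow>
     h ` carrier A \<subseteq> carrier B \<and> inj_on h (carrier A) \<and>
     (\<forall>F as. length as = ar F \<and> set as \<subseteq> carrier A \<longrightarrow>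
        h (opr A F as) = opr B F (map h as)) \<and>
     (\<forall>c. h (cst A c) = cst B c)"

end

theory Submission
  imports Defs
begin

text \<open>Fix assignments \<sigma> i realizing \<phi> i in B. A representative (x, i) of an element of
  the limit algebra is sent to the family j \<mapsto> \<sigma> j (\<gamma> i j x), read modulo an ultrafilter D
  on I containing every cone {j. i \<le> j}; such a D exists because the cones of a directed
  set generate a proper filter. Every conjunct of \<phi> i is carried by \<gamma> i j into \<phi> j, so
  it holds at all coordinates j above i, that is, on a set in D. This makes the map well
  defined and compatible with the operations and constants, and the conjuncts
  \<not> (x = y) of the diagram formulas make it injective.\<close>

section \<open>Proper filters and ultrafilters on a set\<close>

definition proper_filter_on :: "'i set \<Rightarrow> 'i set set \<Rightarrow> bool" where
  "proper_filter_on I F \<longleftrightarrow>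
     F \<subseteq> Pow I \<and> I \<in> F \<and> {} \<notin> F \<and>
     (\<forall>A\<in>F. \<forall>B\<in>F. A \<inter> B \<in> F) \<and>
     (\<forall>A\<in>F. \<forall>B. A \<subseteq> B \<and> B \<subseteq> I \<longrightarrow> B \<in> F)"

lemma
  assumes "proper_filter_on I F"
  shows proper_filter_on_subset: "A \<in> F \<Longrightarrow> A \<subseteq> I"
    and proper_filter_on_top: "I \<in> F"
    and proper_filter_on_nonempty: "A \<in> F \<Longrightarrow> A \<noteq> {}"
    and proper_filter_on_Int: "A \<in> F \<Longrightarrow> B \<in> F \<Longrightarrow> A \<inter> B \<in> F"
    and proper_filter_on_mono: "A \<in> F \<Longrightarrow> A \<subseteq> B \<Longrightarrow> B \<subseteq> I \<Longrightarrow> B \<in> F"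
  using assms unfolding proper_filter_on_def by blast+

lemma ultrafilter_on_iff:
  "ultrafilter_on I D \<longleftrightarrow> proper_filter_on I D \<and> (\<forall>A. A \<subseteq> I \<longrightarrow> A \<in> D \<or> I - A \<in> D)"
  unfolding ultrafilter_on_def proper_filter_on_def by (simp only: conj_assoc)

lemma proper_filter_on_Collect_mono:
  assumes "proper_filter_on I D" "A \<in> D" "\<And>j. j \<in> A \<Longrightarrow> P j"
  shows "{j \<in> I. P j} \<in> D"
  using assms proper_filter_on_subset[OF assms(1,2)]
  by (auto intro: proper_filter_on_mono)

lemma proper_filter_on_Collect_Ball:
  assumes "proper_filter_on I D" "finite N" "\<And>n. n \<in> N \<Longrightarrow> {j \<in> I. P n j} \<in> D"
  shows "{j \<in> I. \<forall>n\<in>N. P n j} \<in> D"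
  using assms(2,3)
proof (induction N rule: finite_induct)
  case empty
  then show ?case
    using proper_filter_on_top[OF assms(1)] by simp
next
  case (insert n N)
  have "{j \<in> I. \<forall>m\<in>insert n N. P m j} = {j \<in> I. P n j} \<inter> {j \<in> I. \<forall>m\<in>N. P m j}"
    by auto
  with insert show ?case
    using proper_filter_on_Int[OF assms(1)] by simp
qed

lemma proper_filter_on_Union_chain:
  assumes "\<C> \<noteq> {}" and filters: "\<And>G. G \<in> \<C> \<Longrightarrow> proper_filter_on I G"
    and chain: "\<And>G H. G \<in> \<C> \<Longrightarrow> H \<in> \<C> \<Longrightarrow> G \<subseteq> H \<or> H \<subseteq> G"
  shows "proper_filter_on I (\<Union>\<C>)"
  unfolding proper_filter_on_def
proof (intro conjI ballI allI impI)
  show "\<Union>\<C> \<subseteq> Pow I" "{} \<notin> \<Union>\<C>"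
    using filters proper_filter_on_subset proper_filter_on_nonempty by blast+
  show "I \<in> \<Union>\<C>"
    using assms(1) filters proper_filter_on_top by blast
  show "A \<inter> B \<in> \<Union>\<C>" if "A \<in> \<Union>\<C>" "B \<in> \<Union>\<C>" for A B
  proof -
    from \<open>A \<in> \<Union>\<C>\<close> \<open>B \<in> \<Union>\<C>\<close> obtain G H where "G \<in> \<C>" "H \<in> \<C>" "A \<in> G" "B \<in> H"
      by blast
    with chain[of G H] show ?thesis
      using filters proper_filter_on_Int by blast
  qed
  show "B \<in> \<Union>\<C>" if "A \<in> \<Union>\<C>" "A \<subseteq> B \<and> B \<subseteq> I" for A B
    using that filters proper_filter_on_mono by blast
qed

text \<open>If some member of a maximal proper filter misses A, the complement of A is in it;
  otherwise A can be adjoined, and maximality says it was already there.\<close>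
lemma maximal_proper_filter_on_ultra:
  assumes M: "proper_filter_on I M"
    and max: "\<And>G. proper_filter_on I G \<Longrightarrow> M \<subseteq> G \<Longrightarrow> G = M"
  shows "ultrafilter_on I M"
  unfolding ultrafilter_on_iff
proof (intro conjI allI impI M)
  fix A assume "A \<subseteq> I"
  show "A \<in> M \<or> I - A \<in> M"
  proof (cases "\<exists>d\<in>M. d \<inter> A = {}")
    case True
    then obtain d where "d \<in> M" "d \<subseteq> I - A"
      using proper_filter_on_subset[OF M] by blast
    then show ?thesis
      using proper_filter_on_mono[OF M] by blast
  next
    case False
    let ?G = "{B. B \<subseteq> I \<and> (\<exists>d\<in>M. d \<inter> A \<subseteq> B)}"
    have "proper_filter_on I ?G"
      unfolding proper_filter_on_def
    proof (intro conjI ballI allI impI)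
      show "?G \<subseteq> Pow I" "{} \<notin> ?G"
        using False by auto
      show "I \<in> ?G"
        using proper_filter_on_top[OF M] by blast
      show "B \<inter> C \<in> ?G" if "B \<in> ?G" "C \<in> ?G" for B C
      proof -
        from \<open>B \<in> ?G\<close> \<open>C \<in> ?G\<close> obtain d e
          where "d \<in> M" "e \<in> M" "d \<inter> A \<subseteq> B" "e \<inter> A \<subseteq> C" "B \<subseteq> I"
          by blast
        moreover have "d \<inter> e \<in> M"
          using proper_filter_on_Int[OF M \<open>d \<in> M\<close> \<open>e \<in> M\<close>] .
        ultimately show ?thesis
          by blast
      qed
      show "C \<in> ?G" if "B \<in> ?G" "B \<subseteq> C \<and> C \<subseteq> I" for B C
        using that by blast
    qed
    moreover have "M \<subseteq> ?G"
      using proper_filter_on_subset[OF M] by blast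
    ultimately have "?G = M"
      by (rule max)
    moreover have "A \<in> ?G"
      using proper_filter_on_top[OF M] \<open>A \<subseteq> I\<close> by blast
    ultimately show ?thesis
      by blast
  qed
qed

lemma proper_filter_on_extends_to_ultrafilter:
  assumes "proper_filter_on I F"
  shows "\<exists>D. ultrafilter_on I D \<and> F \<subseteq> D"
proof -
  let ?\<A> = "{G. proper_filter_on I G \<and> F \<subseteq> G}"
  have "\<exists>M\<in>?\<A>. \<forall>G\<in>?\<A>. M \<subseteq> G \<longrightarrow> G = M"
  proof (rule subset_Zorn_nonempty)
    show "?\<A> \<noteq> {}"
      using assms by blast
    fix \<C> assume "\<C> \<noteq> {}" "subset.chain ?\<A> \<C>"
    then have "\<C> \<noteq> {}" "\<C> \<subseteq> ?\<A>" "\<And>G H. G \<in> \<C> \<Longrightarrow> H \<in> \<C> \<Longrightarrow> G \<subseteq> H \<or> H \<subseteq> G"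
      unfolding subset.chain_def by blast+
    then have "proper_filter_on I (\<Union>\<C>)" "F \<subseteq> \<Union>\<C>"
      using proper_filter_on_Union_chain[of \<C> I] by blast+
    then show "\<Union>\<C> \<in> ?\<A>"
      by simp
  qed
  then obtain M where M: "proper_filter_on I M" "F \<subseteq> M"
    and max: "\<forall>G\<in>?\<A>. M \<subseteq> G \<longrightarrow> G = M"
    by blast
  have "ultrafilter_on I M"
  proof (rule maximal_proper_filter_on_ultra[OF M(1)])
    fix G assume "proper_filter_on I G" "M \<subseteq> G"
    with M(2) max show "G = M"
      by blast
  qed
  with M(2) show ?thesis
    by blast
qed

lemma
  assumes "directed I le"
  shows directed_nonempty: "I \<noteq> {}"
    and directed_refl: "i \<in> I \<Longrightarrow> le i i"
    and directed_trans: "\<lbrakk>i \<in> I; j \<in> I; k \<in> I; le i j; le j k\<rbrakk> \<Longrightarrow> le i k"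
    and directed_upper_bound: "\<lbrakk>i \<in> I; j \<in> I\<rbrakk> \<Longrightarrow> \<exists>k\<in>I. le i k \<and> le j k"
  using assms unfolding directed_def by metis+

lemma directed_finite_upper_bound:
  assumes "directed I le" "finite J" "J \<subseteq> I"
  shows "\<exists>k\<in>I. \<forall>i\<in>J. le i k"
  using assms(2,3)
proof (induction J rule: finite_induct)
  case empty
  then show ?case
    using directed_nonempty[OF assms(1)] by blast
next
  case (insert i J)
  then obtain k where k: "k \<in> I" "\<forall>i'\<in>J. le i' k"
    by blast
  obtain k' where k': "k' \<in> I" "le k k'" "le i k'"
    using directed_upper_bound[OF assms(1) k(1)] insert.prems by blast
  have "le i' k'" if "i' \<in> J" for i'
    using directed_trans[OF assms(1) _ k(1) k'(1)] that k(2) k'(2) insert.prems by blast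
  with k' show ?case
    by blast
qed

lemma directed_cone_filter:
  assumes "directed I le"
  shows "proper_filter_on I {A. A \<subseteq> I \<and> (\<exists>i\<in>I. {j \<in> I. le i j} \<subseteq> A)}"
    (is "proper_filter_on I ?F")
  unfolding proper_filter_on_def
proof (intro conjI ballI allI impI)
  show "I \<in> ?F"
    using directed_nonempty[OF assms] by blast
  show "{} \<notin> ?F"
    using directed_refl[OF assms] by blast
  fix A B assume "A \<in> ?F" "B \<in> ?F"
  then obtain i i' where ii': "i \<in> I" "i' \<in> I" "{j \<in> I. le i j} \<subseteq> A" "{j \<in> I. le i' j} \<subseteq> B"
    and "A \<subseteq> I"
    by blast
  obtain k where k: "k \<in> I" "le i k" "le i' k"
    using directed_upper_bound[OF assms ii'(1,2)] by blast
  have "{j \<in> I. le k j} \<subseteq> A \<inter> B"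
    using ii' k directed_trans[OF assms ii'(1) k(1)] directed_trans[OF assms ii'(2) k(1)] by blast
  then show "A \<inter> B \<in> ?F"
    using \<open>k \<in> I\<close> \<open>A \<subseteq> I\<close> by blast
qed auto

lemma directed_ex_ultrafilter_cones:
  assumes "directed I le"
  shows "\<exists>D. ultrafilter_on I D \<and> (\<forall>i\<in>I. {j \<in> I. le i j} \<in> D)"
proof -
  let ?F = "{A. A \<subseteq> I \<and> (\<exists>i\<in>I. {j \<in> I. le i j} \<subseteq> A)}"
  obtain D where "ultrafilter_on I D" "?F \<subseteq> D"
    using proper_filter_on_extends_to_ultrafilter[OF directed_cone_filter[OF assms]] by blast
  moreover have "{j \<in> I. le i j} \<in> ?F" if "i \<in> I" for i
    using that by auto
  ultimately show ?thesis
    by blast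
qed

lemma is_alg_opr_closed:
  "is_alg ar B \<Longrightarrow> length bs = ar F \<Longrightarrow> set bs \<subseteq> carrier B \<Longrightarrow> opr B F bs \<in> carrier B"
  unfolding is_alg_def by blast

lemma is_alg_cst_closed: "is_alg ar B \<Longrightarrow> cst B c \<in> carrier B"
  unfolding is_alg_def by blast

lemma eval_subst_trm: "eval A \<sigma> (subst_trm g t) = eval A (\<sigma> \<circ> g) t"
  by (induction t) (simp_all cong: map_cong)

lemma sat_subst_lit: "sat_lit A \<sigma> (subst_lit g l) = sat_lit A (\<sigma> \<circ> g) l"
  by (cases l) (simp_all add: eval_subst_trm)

lemma some_elem_equiv_class:
  assumes "equiv S R" "x \<in> S"
  shows "(x, some_elem (R `` {x})) \<in> R"
proof -
  have "x \<in> R `` {x}"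
    using assms by (rule equiv_class_self)
  then have "some_elem (R `` {x}) \<in> R `` {x}"
    by (intro some_elem_nonempty) blast
  then show ?thesis
    by simp
qed

lemma some_elem_quotient:
  assumes "equiv S R" "a \<in> S // R"
  shows "some_elem a \<in> S"
proof -
  obtain x where "a = R `` {x}" "x \<in> S"
    using assms(2) by (rule quotientE)
  then show ?thesis
    using some_elem_equiv_class[OF assms(1)] equiv_type[OF assms(1)] by blast
qed

lemma up_rel_iff:
  "(f, g) \<in> up_rel I D B \<longleftrightarrow> f \<in> I \<rightarrow>\<^sub>E B \<and> g \<in> I \<rightarrow>\<^sub>E B \<and> {i \<in> I. f i = g i} \<in> D"
  by (simp add: up_rel_def)

lemma equiv_up_rel:
  assumes "proper_filter_on I D"
  shows "equiv (I \<rightarrow>\<^sub>E B) (up_rel I D B)"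
proof (rule equivI)
  show "up_rel I D B \<subseteq> (I \<rightarrow>\<^sub>E B) \<times> (I \<rightarrow>\<^sub>E B)"
    by (auto simp: up_rel_def)
  show "refl_on (I \<rightarrow>\<^sub>E B) (up_rel I D B)"
    by (rule refl_onI) (auto simp: up_rel_def proper_filter_on_top[OF assms])
  show "sym (up_rel I D B)"
    by (rule symI) (auto simp: up_rel_def eq_commute)
  show "trans (up_rel I D B)"
  proof (rule transI)
    fix f g h assume "(f, g) \<in> up_rel I D B" "(g, h) \<in> up_rel I D B"
    then have "{i \<in> I. f i = g i} \<inter> {i \<in> I. g i = h i} \<in> D" "f \<in> I \<rightarrow>\<^sub>E B" "h \<in> I \<rightarrow>\<^sub>E B"
      using proper_filter_on_Int[OF assms] by (auto simp: up_rel_iff)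
    then show "(f, h) \<in> up_rel I D B"
      unfolding up_rel_iff by (auto intro: proper_filter_on_Collect_mono[OF assms])
  qed
qed

lemma up_rel_map_eval:
  assumes "proper_filter_on I D" "list_all2 (\<lambda>f g. (f, g) \<in> up_rel I D B) fs gs"
  shows "{i \<in> I. map (\<lambda>f. f i) fs = map (\<lambda>g. g i) gs} \<in> D"
proof -
  have "{i \<in> I. \<forall>n\<in>{..<length fs}. (fs ! n) i = (gs ! n) i} \<in> D"
    using assms(2)
    by (intro proper_filter_on_Collect_Ball[OF assms(1)]) (auto simp: list_all2_conv_all_nth up_rel_def)
  then show ?thesis
    by (rule proper_filter_on_Collect_mono[OF assms(1)])
      (use assms(2) in \<open>auto simp: list_all2_conv_all_nth intro: nth_equalityI\<close>)
qed

lemma pointwise_opr_funcset: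
  assumes "is_alg ar B" "length fs = ar F" "set fs \<subseteq> I \<rightarrow>\<^sub>E carrier B"
  shows "(\<lambda>i\<in>I. opr B F (map (\<lambda>f. f i) fs)) \<in> I \<rightarrow>\<^sub>E carrier B"
proof -
  have "opr B F (map (\<lambda>f. f i) fs) \<in> carrier B" if "i \<in> I" for i
    using assms that by (intro is_alg_opr_closed) (auto intro: PiE_mem)
  then show ?thesis
    by simp
qed

lemma carrier_ultrapower:
  "carrier (ultrapower B I D) = (I \<rightarrow>\<^sub>E carrier B) // up_rel I D (carrier B)"
  by (simp add: ultrapower_def Let_def)

lemma cst_ultrapower: "cst (ultrapower B I D) c = up_rel I D (carrier B) `` {\<lambda>i\<in>I. cst B c}"
  by (simp add: ultrapower_def Let_def)

lemma opr_ultrapower_classes: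
  assumes "is_alg ar B" "proper_filter_on I D" "length fs = ar F" "set fs \<subseteq> I \<rightarrow>\<^sub>E carrier B"
  shows "opr (ultrapower B I D) F (map (\<lambda>f. up_rel I D (carrier B) `` {f}) fs) =
           up_rel I D (carrier B) `` {\<lambda>i\<in>I. opr B F (map (\<lambda>f. f i) fs)}"
proof -
  let ?R = "up_rel I D (carrier B)"
  define gs where "gs = map (\<lambda>f. some_elem (?R `` {f})) fs"
  have opr: "opr (ultrapower B I D) F (map (\<lambda>f. ?R `` {f}) fs) =
               ?R `` {\<lambda>i\<in>I. opr B F (map (\<lambda>g. g i) gs)}"
    by (simp add: ultrapower_def Let_def gs_def some_elem_def comp_def)
  have rep: "(f, some_elem (?R `` {f})) \<in> ?R" if "f \<in> set fs" for f
    using that assms(4) by (intro some_elem_equiv_class[OF equiv_up_rel[OF assms(2)]]) blast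
  then have rel: "list_all2 (\<lambda>f g. (f, g) \<in> ?R) fs gs"
    by (simp add: gs_def list_all2_map2 list_all2_same)
  have "set gs \<subseteq> I \<rightarrow>\<^sub>E carrier B"
    using rep unfolding gs_def up_rel_iff by auto
  have "{i \<in> I. map (\<lambda>f. f i) fs = map (\<lambda>g. g i) gs} \<in> D"
    by (rule up_rel_map_eval[OF assms(2) rel])
  then have "{i \<in> I. (\<lambda>i\<in>I. opr B F (map (\<lambda>f. f i) fs)) i =
                      (\<lambda>i\<in>I. opr B F (map (\<lambda>g. g i) gs)) i} \<in> D"
    by (rule proper_filter_on_Collect_mono[OF assms(2)]) simp
  moreover have "length gs = ar F"
    using assms(3) by (simp add: gs_def)
  ultimately have "(\<lambda>i\<in>I. opr B F (map (\<lambda>f. f i) fs), \<lambda>i\<in>I. opr B F (map (\<lambda>g. g i) gs)) \<in> ?R"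
    unfolding up_rel_iff
    using pointwise_opr_funcset[OF assms(1)] assms(3,4) \<open>set gs \<subseteq> I \<rightarrow>\<^sub>E carrier B\<close> by blast
  then show ?thesis
    unfolding opr by (rule equiv_class_eq[OF equiv_up_rel[OF assms(2)], symmetric])
qed

section \<open>The limit algebra of a direct system of formulas\<close>

locale direct_system_formulas =
  fixes ar :: "'f \<Rightarrow> nat"
    and I :: "'i set" and le :: "'i \<Rightarrow> 'i \<Rightarrow> bool"
    and Fs :: "'i \<Rightarrow> 'f set" and Cs :: "'i \<Rightarrow> 'c set"
    and X :: "'i \<Rightarrow> 'v set" and \<phi> :: "'i \<Rightarrow> ('f, 'c, 'v) lit set"
    and \<gamma> :: "'i \<Rightarrow> 'i \<Rightarrow> 'v \<Rightarrow> 'v"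
  assumes system: "direct_system ar I le Fs Cs X \<phi> \<gamma>"
begin

abbreviation "lim_pairs \<equiv> {(x, i). i \<in> I \<and> x \<in> X i}"
abbreviation "lim_eq \<equiv> lim_rel I le X \<gamma>"
abbreviation "limit \<equiv> lim_alg I le X \<phi> \<gamma>"

lemma directed: "directed I le"
  using system unfolding direct_system_def by (elim conjE)

lemma \<gamma>_into: "\<lbrakk>i \<in> I; j \<in> I; le i j; x \<in> X i\<rbrakk> \<Longrightarrow> \<gamma> i j x \<in> X j"
  using system unfolding direct_system_def by blast

lemma \<gamma>_comp:
  "\<lbrakk>i \<in> I; j \<in> I; k \<in> I; le i j; le j k; x \<in> X i\<rbrakk> \<Longrightarrow> \<gamma> j k (\<gamma> i j x) = \<gamma> i k x"
  using system unfolding direct_system_def by blast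

lemma subst_lit_\<gamma>: "\<lbrakk>i \<in> I; j \<in> I; le i j; l \<in> \<phi> i\<rbrakk> \<Longrightarrow> subst_lit (\<gamma> i j) l \<in> \<phi> j"
  using system unfolding direct_system_def by blast

lemma cst_witness: "\<exists>i\<in>I. \<exists>x\<in>X i. Pos (Var x) (Cst c) \<in> \<phi> i"
  using system unfolding direct_system_def by blast

lemma opr_witness:
  "\<lbrakk>i \<in> I; length xs = ar F; set xs \<subseteq> X i\<rbrakk> \<Longrightarrow>
     \<exists>j\<in>I. le i j \<and> (\<exists>x\<in>X j. Pos (App F (map (\<lambda>x. Var (\<gamma> i j x)) xs)) (Var x) \<in> \<phi> j)"
  using system unfolding direct_system_def by blast

lemma distinct_vars_Neg:
  assumes "i \<in> I" "x \<in> X i" "y \<in> X i" "x \<noteq> y"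
  shows "Neg (Var x) (Var y) \<in> \<phi> i"
proof -
  have "diagram_formula ar (Fs i) (Cs i) (X i) (\<phi> i)"
    using system assms(1) unfolding direct_system_def by blast
  with assms(2-4) show ?thesis
    unfolding diagram_formula_def by blast
qed

lemma lim_rel_iff:
  "((x, i), (y, j)) \<in> lim_eq \<longleftrightarrow>
     i \<in> I \<and> j \<in> I \<and> x \<in> X i \<and> y \<in> X j \<and> (\<exists>k\<in>I. le i k \<and> le j k \<and> \<gamma> i k x = \<gamma> j k y)"
  by (simp add: lim_rel_def)

lemma \<gamma>_eq_above:
  assumes "i \<in> I" "j \<in> I" "k \<in> I" "l \<in> I" "x \<in> X i" "y \<in> X j"
    and "le i k" "le j k" "le k l" "\<gamma> i k x = \<gamma> j k y"
  shows "\<gamma> i l x = \<gamma> j l y"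
proof -
  have "\<gamma> i l x = \<gamma> k l (\<gamma> i k x)"
    using \<gamma>_comp[of i k l x] assms by simp
  also have "\<dots> = \<gamma> k l (\<gamma> j k y)"
    using assms(10) by simp
  also have "\<dots> = \<gamma> j l y"
    using \<gamma>_comp[of j k l y] assms by simp
  finally show ?thesis .
qed

lemma equiv_lim_rel: "equiv lim_pairs lim_eq"
proof (rule equivI)
  show "lim_eq \<subseteq> lim_pairs \<times> lim_pairs"
    by (auto simp: lim_rel_def)
  show "refl_on lim_pairs lim_eq"
  proof (rule refl_onI)
    fix p assume "p \<in> lim_pairs"
    then obtain x i where "p = (x, i)" "i \<in> I" "x \<in> X i"
      by blast
    then show "(p, p) \<in> lim_eq"
      using directed_refl[OF directed] by (auto simp: lim_rel_iff)
  qed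
  show "sym lim_eq"
    by (rule symI) (auto simp: lim_rel_def)
  show "trans lim_eq"
  proof (rule transI)
    fix p q r assume "(p, q) \<in> lim_eq" "(q, r) \<in> lim_eq"
    then obtain x i y j z l k k' where pqr: "p = (x, i)" "q = (y, j)" "r = (z, l)"
      and xyz: "i \<in> I" "j \<in> I" "l \<in> I" "x \<in> X i" "y \<in> X j" "z \<in> X l"
      and k: "k \<in> I" "le i k" "le j k" "\<gamma> i k x = \<gamma> j k y"
      and k': "k' \<in> I" "le j k'" "le l k'" "\<gamma> j k' y = \<gamma> l k' z"
      by (cases p, cases q, cases r) (auto simp: lim_rel_iff)
    obtain m where m: "m \<in> I" "le k m" "le k' m"
      using directed_upper_bound[OF directed k(1) k'(1)] by blast
    have "\<gamma> i m x = \<gamma> j m y"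
      using \<gamma>_eq_above[OF xyz(1,2) k(1) m(1) xyz(4,5) k(2,3) m(2) k(4)] .
    also have "\<dots> = \<gamma> l m z"
      using \<gamma>_eq_above[OF xyz(2,3) k'(1) m(1) xyz(5,6) k'(2,3) m(3) k'(4)] .
    finally show "(p, r) \<in> lim_eq"
      unfolding pqr lim_rel_iff
      using xyz m k k' directed_trans[OF directed] by blast
  qed
qed

lemma carrier_lim_alg: "carrier limit = lim_pairs // lim_eq"
  by (simp add: lim_alg_def Let_def)

lemma cst_lim_alg:
  obtains x i where "i \<in> I" "x \<in> X i" "Pos (Var x) (Cst c) \<in> \<phi> i"
    and "cst limit c = lim_eq `` {(x, i)}"
proof -
  let ?Q = "\<lambda>(x, i). i \<in> I \<and> x \<in> X i \<and> Pos (Var x) (Cst c) \<in> \<phi> i"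
  have "\<exists>p. ?Q p"
    using cst_witness by blast
  then have "?Q (Eps ?Q)"
    by (rule someI_ex)
  moreover have "cst limit c = lim_eq `` {Eps ?Q}"
    by (simp add: lim_alg_def Let_def)
  ultimately show ?thesis
    using that by (cases "Eps ?Q") auto
qed

lemma some_elem_lim_pairs: "a \<in> carrier limit \<Longrightarrow> some_elem a \<in> lim_pairs"
  using some_elem_quotient[OF equiv_lim_rel] by (simp add: carrier_lim_alg)

text \<open>Arguments living at different stages are first moved to a common stage i; the
  direct system then provides a later stage where F applied to them has a value.\<close>
lemma opr_witness_common_stage:
  assumes "length ps = ar F" "set ps \<subseteq> lim_pairs"
  shows "\<exists>x k. k \<in> I \<and> x \<in> X k \<and> (\<forall>p\<in>set ps. le (snd p) k) \<and>
           Pos (App F (map (\<lambda>p. Var (\<gamma> (snd p) k (fst p))) ps)) (Var x) \<in> \<phi> k"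
proof -
  have "snd ` set ps \<subseteq> I"
    using assms(2) by auto
  then obtain i where i: "i \<in> I" "\<forall>p\<in>set ps. le (snd p) i"
    using directed_finite_upper_bound[OF directed, of "snd ` set ps"] by auto
  define xs where "xs = map (\<lambda>p. \<gamma> (snd p) i (fst p)) ps"
  have "length xs = ar F"
    using assms(1) by (simp add: xs_def)
  moreover have "set xs \<subseteq> X i"
    unfolding xs_def using assms(2) i by (auto intro!: \<gamma>_into)
  ultimately obtain j x where j: "j \<in> I" "le i j" "x \<in> X j"
    and lit: "Pos (App F (map (\<lambda>x. Var (\<gamma> i j x)) xs)) (Var x) \<in> \<phi> j"
    using opr_witness[OF i(1)] by blast
  have args: "map (\<lambda>x. Var (\<gamma> i j x)) xs = map (\<lambda>p. Var (\<gamma> (snd p) j (fst p))) ps"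
    unfolding xs_def using assms(2) i j by (auto intro!: \<gamma>_comp)
  have "\<forall>p\<in>set ps. le (snd p) j"
  proof
    fix p assume "p \<in> set ps"
    then have "snd p \<in> I" "le (snd p) i"
      using assms(2) i by auto
    then show "le (snd p) j"
      using directed_trans[OF directed _ i(1) j(1) _ j(2)] by blast
  qed
  with j lit[unfolded args] show ?thesis
    by blast
qed

lemma opr_lim_alg:
  assumes "length as = ar F" "set as \<subseteq> carrier limit"
  defines "ps \<equiv> map some_elem as"
  obtains x k where "k \<in> I" "x \<in> X k" "\<forall>p\<in>set ps. le (snd p) k"
    and "Pos (App F (map (\<lambda>p. Var (\<gamma> (snd p) k (fst p))) ps)) (Var x) \<in> \<phi> k"
    and "opr limit F as = lim_eq `` {(x, k)}"
proof -
  let ?Q = "\<lambda>(x, k). k \<in> I \<and> x \<in> X k \<and> (\<forall>p\<in>set ps. le (snd p) k) \<and>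
              Pos (App F (map (\<lambda>p. Var (\<gamma> (snd p) k (fst p))) ps)) (Var x) \<in> \<phi> k"
  have "length ps = ar F"
    using assms(1) by (simp add: ps_def)
  moreover have "set ps \<subseteq> lim_pairs"
    unfolding ps_def set_map using assms(2) by (intro image_subsetI some_elem_lim_pairs) blast
  ultimately have "Ex ?Q"
    using opr_witness_common_stage by simp
  then have "?Q (Eps ?Q)"
    by (rule someI_ex)
  moreover have "opr limit F as = lim_eq `` {Eps ?Q}"
    by (simp add: lim_alg_def Let_def ps_def some_elem_def[abs_def])
  ultimately show ?thesis
    using that by (cases "Eps ?Q") auto
qed

end

section \<open>Embedding the limit algebra into an ultrapower\<close>

locale realized_direct_system = direct_system_formulas ar I le Fs Cs X \<phi> \<gamma>
  for ar :: "'f \<Rightarrow> nat" and I :: "'i set" and le Fs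
    and Cs :: "'i \<Rightarrow> 'c set" and X :: "'i \<Rightarrow> 'v set" and \<phi> \<gamma> +
  fixes B :: "('b, 'f, 'c) alg" and \<sigma> :: "'i \<Rightarrow> 'v \<Rightarrow> 'b" and D :: "'i set set"
  assumes alg: "is_alg ar B"
    and \<sigma>_into: "\<lbrakk>i \<in> I; x \<in> X i\<rbrakk> \<Longrightarrow> \<sigma> i x \<in> carrier B"
    and \<sigma>_sat: "\<lbrakk>i \<in> I; l \<in> \<phi> i\<rbrakk> \<Longrightarrow> sat_lit B (\<sigma> i) l"
    and filter: "proper_filter_on I D"
    and cones: "i \<in> I \<Longrightarrow> {j \<in> I. le i j} \<in> D"
begin

abbreviation "up_eq \<equiv> up_rel I D (carrier B)"

text \<open>Off the cone above the stage of p the value is irrelevant, as the cone lies in D.\<close>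
definition thread :: "'v \<times> 'i \<Rightarrow> 'i \<Rightarrow> 'b" where
  "thread p = (\<lambda>j\<in>I. if le (snd p) j then \<sigma> j (\<gamma> (snd p) j (fst p)) else some_elem (carrier B))"

definition emb :: "('v \<times> 'i) set \<Rightarrow> ('i \<Rightarrow> 'b) set" where
  "emb a = up_eq `` {thread (some_elem a)}"

lemma thread_above: "\<lbrakk>j \<in> I; le i j\<rbrakk> \<Longrightarrow> thread (x, i) j = \<sigma> j (\<gamma> i j x)"
  by (simp add: thread_def)

lemma thread_funcset:
  assumes "p \<in> lim_pairs"
  shows "thread p \<in> I \<rightarrow>\<^sub>E carrier B"
proof -
  have "some_elem (carrier B) \<in> carrier B"
    using is_alg_cst_closed[OF alg] by (intro some_elem_nonempty) blast
  with assms show ?thesis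
    by (auto simp: thread_def intro!: \<sigma>_into \<gamma>_into)
qed

lemma eventually_above:
  "\<lbrakk>i \<in> I; \<And>j. \<lbrakk>j \<in> I; le i j\<rbrakk> \<Longrightarrow> P j\<rbrakk> \<Longrightarrow> {j \<in> I. P j} \<in> D"
  using proper_filter_on_Collect_mono[OF filter cones] by blast

lemma sat_above: "\<lbrakk>i \<in> I; j \<in> I; le i j; l \<in> \<phi> i\<rbrakk> \<Longrightarrow> sat_lit B (\<sigma> j \<circ> \<gamma> i j) l"
  using \<sigma>_sat subst_lit_\<gamma> sat_subst_lit by metis

lemma thread_respects:
  assumes "(p, q) \<in> lim_eq"
  shows "(thread p, thread q) \<in> up_eq"
proof -
  obtain x i y i' k where pq: "p = (x, i)" "q = (y, i')"
    and xy: "i \<in> I" "i' \<in> I" "x \<in> X i" "y \<in> X i'"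
    and k: "k \<in> I" "le i k" "le i' k" "\<gamma> i k x = \<gamma> i' k y"
    using assms by (cases p, cases q) (auto simp: lim_rel_iff)
  have "{j \<in> I. thread p j = thread q j} \<in> D"
  proof (rule eventually_above[OF k(1)])
    fix j assume j: "j \<in> I" "le k j"
    have "le i j" "le i' j"
      using directed_trans[OF directed] xy k j by blast+
    then show "thread p j = thread q j"
      using \<gamma>_eq_above[OF xy(1,2) k(1) j(1) xy(3,4) k(2,3) j(2) k(4)] j(1)
      by (simp add: pq thread_above)
  qed
  with xy show ?thesis
    by (simp add: up_rel_iff pq thread_funcset)
qed

text \<open>The two threads agree at some j above both indices, and there the diagram
  formula says that distinct variables get distinct values.\<close>
lemma thread_reflects:
  assumes "p \<in> lim_pairs" "q \<in> lim_pairs" "(thread p, thread q) \<in> up_eq"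
  shows "(p, q) \<in> lim_eq"
proof -
  obtain x i y i' where pq: "p = (x, i)" "q = (y, i')"
    and xy: "i \<in> I" "i' \<in> I" "x \<in> X i" "y \<in> X i'"
    using assms(1,2) by blast
  obtain k where k: "k \<in> I" "le i k" "le i' k"
    using directed_upper_bound[OF directed xy(1,2)] by blast
  have "{j \<in> I. thread p j = thread q j} \<inter> {j \<in> I. le k j} \<in> D"
    using assms(3) cones[OF k(1)] proper_filter_on_Int[OF filter] by (simp add: up_rel_iff)
  then obtain j where j: "j \<in> I" "le k j" "thread p j = thread q j"
    using proper_filter_on_nonempty[OF filter] by blast
  have ij: "le i j" "le i' j"
    using directed_trans[OF directed] xy k j by blast+
  then have "\<sigma> j (\<gamma> i j x) = \<sigma> j (\<gamma> i' j y)"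
    using j by (simp add: pq thread_above)
  then have "\<gamma> i j x = \<gamma> i' j y"
    using \<sigma>_sat[OF j(1) distinct_vars_Neg[OF j(1)]] \<gamma>_into xy ij j(1) by fastforce
  with xy j ij show ?thesis
    by (auto simp: pq lim_rel_iff)
qed

lemma emb_class:
  assumes "p \<in> lim_pairs"
  shows "emb (lim_eq `` {p}) = up_eq `` {thread p}"
proof -
  have "(p, some_elem (lim_eq `` {p})) \<in> lim_eq"
    using equiv_lim_rel assms by (rule some_elem_equiv_class)
  then show ?thesis
    unfolding emb_def by (intro equiv_class_eq[OF equiv_up_rel[OF filter], symmetric] thread_respects)
qed

lemma emb_carrier: "emb ` carrier limit \<subseteq> carrier (ultrapower B I D)"
proof
  fix b assume "b \<in> emb ` carrier limit"
  then obtain p where "p \<in> lim_pairs" "b = emb (lim_eq `` {p})"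
    by (auto simp: carrier_lim_alg elim: quotientE)
  then show "b \<in> carrier (ultrapower B I D)"
    by (simp add: emb_class carrier_ultrapower quotientI thread_funcset)
qed

lemma inj_on_emb: "inj_on emb (carrier limit)"
proof (rule inj_onI)
  fix a b assume "a \<in> carrier limit" "b \<in> carrier limit" "emb a = emb b"
  then obtain p q where pq: "p \<in> lim_pairs" "q \<in> lim_pairs" "a = lim_eq `` {p}" "b = lim_eq `` {q}"
    and "up_eq `` {thread p} = up_eq `` {thread q}"
    by (auto simp: carrier_lim_alg emb_class elim!: quotientE)
  then have "(thread p, thread q) \<in> up_eq"
    using eq_equiv_class[OF _ equiv_up_rel[OF filter] thread_funcset] by blast
  then have "(p, q) \<in> lim_eq"
    using thread_reflects pq(1,2) by blast
  then show "a = b"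
    using pq(3,4) equiv_class_eq[OF equiv_lim_rel] by simp
qed

lemma emb_cst: "emb (cst limit c) = cst (ultrapower B I D) c"
proof -
  obtain x i where xi: "i \<in> I" "x \<in> X i" "Pos (Var x) (Cst c) \<in> \<phi> i"
    and cst: "cst limit c = lim_eq `` {(x, i)}"
    by (rule cst_lim_alg)
  have "{j \<in> I. thread (x, i) j = (\<lambda>j\<in>I. cst B c) j} \<in> D"
  proof (rule eventually_above[OF xi(1)])
    fix j assume "j \<in> I" "le i j"
    then show "thread (x, i) j = (\<lambda>j\<in>I. cst B c) j"
      using sat_above[OF xi(1) _ _ xi(3)] by (simp add: thread_above)
  qed
  moreover have "(\<lambda>j\<in>I. cst B c) \<in> I \<rightarrow>\<^sub>E carrier B"
    using is_alg_cst_closed[OF alg] by simp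
  ultimately have "(thread (x, i), \<lambda>j\<in>I. cst B c) \<in> up_eq"
    using thread_funcset xi(1,2) by (simp add: up_rel_iff)
  then show ?thesis
    using xi(1,2) by (simp add: cst emb_class cst_ultrapower equiv_class_eq[OF equiv_up_rel[OF filter]])
qed

lemma thread_opr_above:
  assumes "set ps \<subseteq> lim_pairs" "k \<in> I" "\<forall>p\<in>set ps. le (snd p) k"
    and "Pos (App F (map (\<lambda>p. Var (\<gamma> (snd p) k (fst p))) ps)) (Var x) \<in> \<phi> k"
    and "j \<in> I" "le k j"
  shows "thread (x, k) j = opr B F (map (\<lambda>p. thread p j) ps)"
proof -
  have "thread p j = \<sigma> j (\<gamma> k j (\<gamma> (snd p) k (fst p)))" if "p \<in> set ps" for p
  proof -
    have "snd p \<in> I" "fst p \<in> X (snd p)" "le (snd p) k"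
      using that assms(1,3) by auto
    then show ?thesis
      using thread_above[of j "snd p" "fst p"] \<gamma>_comp[of "snd p" k j "fst p"]
        directed_trans[OF directed _ assms(2,5) _ assms(6)] assms(2,5,6) by simp
  qed
  moreover have "sat_lit B (\<sigma> j \<circ> \<gamma> k j) (Pos (App F (map (\<lambda>p. Var (\<gamma> (snd p) k (fst p))) ps)) (Var x))"
    using sat_above[OF assms(2,5,6,4)] .
  ultimately show ?thesis
    using assms(5,6) by (simp add: thread_above comp_def cong: map_cong)
qed

lemma emb_opr:
  assumes "length as = ar F" "set as \<subseteq> carrier limit"
  shows "emb (opr limit F as) = opr (ultrapower B I D) F (map emb as)"
proof -
  define ps where "ps = map some_elem as"
  obtain x k where k: "k \<in> I" "x \<in> X k" "\<forall>p\<in>set ps. le (snd p) k"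
    and lit: "Pos (App F (map (\<lambda>p. Var (\<gamma> (snd p) k (fst p))) ps)) (Var x) \<in> \<phi> k"
    and opr: "opr limit F as = lim_eq `` {(x, k)}"
    using opr_lim_alg[OF assms, folded ps_def] .
  have ps: "set ps \<subseteq> lim_pairs"
    unfolding ps_def set_map using assms(2) by (intro image_subsetI some_elem_lim_pairs) blast
  then have threads: "set (map thread ps) \<subseteq> I \<rightarrow>\<^sub>E carrier B"
    unfolding set_map by (intro image_subsetI thread_funcset) blast
  have len: "length (map thread ps) = ar F"
    using assms(1) by (simp add: ps_def)
  have "map emb as = map (\<lambda>f. up_eq `` {f}) (map thread ps)"
    by (simp add: emb_def ps_def)
  then have rhs: "opr (ultrapower B I D) F (map emb as) =
                    up_eq `` {\<lambda>j\<in>I. opr B F (map (\<lambda>p. thread p j) ps)}"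
    using opr_ultrapower_classes[OF alg filter len threads] by (simp add: comp_def)
  have "{j \<in> I. thread (x, k) j = (\<lambda>j\<in>I. opr B F (map (\<lambda>p. thread p j) ps)) j} \<in> D"
    using thread_opr_above[OF ps k(1,3) lit] by (intro eventually_above[OF k(1)]) simp
  then have "(thread (x, k), \<lambda>j\<in>I. opr B F (map (\<lambda>p. thread p j) ps)) \<in> up_eq"
    using thread_funcset[of "(x, k)"] k(1,2) pointwise_opr_funcset[OF alg len threads]
    by (simp add: up_rel_iff comp_def)
  then show ?thesis
    using k(1,2) by (simp add: opr rhs emb_class equiv_class_eq[OF equiv_up_rel[OF filter]])
qed

lemma embedding_emb: "embedding ar emb limit (ultrapower B I D)"
  unfolding embedding_def using emb_carrier inj_on_emb emb_opr emb_cst by blast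

end

theorem mainTheorem11:
  fixes ar :: "'f \<Rightarrow> nat"
    and I :: "'i set" and le :: "'i \<Rightarrow> 'i \<Rightarrow> bool"
    and Fs :: "'i \<Rightarrow> 'f set" and Cs :: "'i \<Rightarrow> 'c set"
    and X :: "'i \<Rightarrow> 'v set" and \<phi> :: "'i \<Rightarrow> ('f, 'c, 'v) lit set"
    and \<gamma> :: "'i \<Rightarrow> 'i \<Rightarrow> 'v \<Rightarrow> 'v"
    and B :: "('b, 'f, 'c) alg"
  assumes "direct_system ar I le Fs Cs X \<phi> \<gamma>"
    and "is_alg ar B"
    and "\<forall>i\<in>I. realizable B (X i) (\<phi> i)"
  shows "\<exists>D. ultrafilter_on I D \<and>
           (\<exists>h. embedding ar h (lim_alg I le X \<phi> \<gamma>) (ultrapower B I D))"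
proof -
  interpret direct_system_formulas ar I le Fs Cs X \<phi> \<gamma>
    using assms(1) by unfold_locales
  obtain \<sigma> where \<sigma>: "\<forall>i\<in>I. \<sigma> i ` X i \<subseteq> carrier B \<and> (\<forall>l\<in>\<phi> i. sat_lit B (\<sigma> i) l)"
    using bchoice[OF assms(3)[unfolded realizable_def]] by blast
  obtain D where D: "ultrafilter_on I D" "\<forall>i\<in>I. {j \<in> I. le i j} \<in> D"
    using directed_ex_ultrafilter_cones[OF directed] by blast
  interpret realized_direct_system ar I le Fs Cs X \<phi> \<gamma> B \<sigma> D
    using assms(2) \<sigma> D by unfold_locales (auto simp: ultrafilter_on_iff)
  show ?thesis
    using D(1) embedding_emb by blast
qed

end
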